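(* Let $\mathcal{H}_k$ be a truncated space with orthonormal basis $f_m(z)=(1+b_mz)z^m$, $m\ge0$, where $b_t=0$ for all $t\ge n$; let $U:\mathcal{H}_k\to H^2(\mathbb{D})$ be the unitary with $Uf_m=z^m$, and let $S_n=UM_zU^*$ be the corresponding $n$-shift on $H^2(\mathbb{D})$. Then every closed subspace $\mathcal{M}\subseteq H^2(\mathbb{D})$ invariant under $S_n$ is hyperinvariant for $S_n$, i.e. $X\mathcal{M}\subseteq\mathcal{M}$ for every bounded operator $X$ on $H^2(\mathbb{D})$ with $XS_n=S_nX$.
   Context: Fix $n \ge 1$. $H^2(\mathbb{D})$ is the Hardy space on the open unit disc. A truncated space is a reproducing kernel Hilbert space $\mathcal{H}_k$ of analytic functions on $\mathbb{D}$ (with scalar analytic kernel $k$) such that: $\mathbb{C}[z]\subseteq\mathcal{H}_k$; the multiplication operator $M_z$ is bounded on $\mathcal{H}_k$; and the functions $f_m(z) = (1 + b_m z)z^m$, $m \ge 0$, form an orthonormal basis of $\mathcal{H}_k$, for scalars $\{b_m\}$ with $b_t = 0$ for $t \ge n$. *)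

theory Defs
  imports "HOL-Analysis.Analysis"
begin

definition l2 :: "(nat \<Rightarrow> complex) set" where
  "l2 = {c. summable (\<lambda>m. (cmod (c m))^2)}"

definition H2 :: "(complex \<Rightarrow> complex) set" where
  "H2 = {f. \<exists>c\<in>l2. (\<forall>z\<in>ball 0 1. (\<lambda>m. c m * z ^ m) sums f z)
              \<and> (\<forall>z. z \<notin> ball 0 1 \<longrightarrow> f z = 0)}"

definition h2coeff :: "(complex \<Rightarrow> complex) \<Rightarrow> nat \<Rightarrow> complex" where
  "h2coeff f = (THE c. c \<in> l2 \<and> (\<forall>z\<in>ball 0 1. (\<lambda>m. c m * z ^ m) sums f z))"

definition h2norm :: "(complex \<Rightarrow> complex) \<Rightarrow> real" where
  "h2norm f = sqrt (\<Sum>m. (cmod (h2coeff f m))^2)"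

definition fb :: "(nat \<Rightarrow> complex) \<Rightarrow> nat \<Rightarrow> complex \<Rightarrow> complex" where
  "fb b m z = (1 + b m * z) * z ^ m"

text \<open>The truncated space H_k: all sums of l2-combinations of the f_m (its norm makes
  the f_m an orthonormal basis).\<close>
definition Hk :: "(nat \<Rightarrow> complex) \<Rightarrow> (complex \<Rightarrow> complex) set" where
  "Hk b = {g. \<exists>c\<in>l2. (\<forall>z\<in>ball 0 1. (\<lambda>m. c m * fb b m z) sums g z)
              \<and> (\<forall>z. z \<notin> ball 0 1 \<longrightarrow> g z = 0)}"

definition hk_coeff :: "(nat \<Rightarrow> complex) \<Rightarrow> (complex \<Rightarrow> complex) \<Rightarrow> nat \<Rightarrow> complex" where
  "hk_coeff b g = (THE c. c \<in> l2 \<and> (\<forall>z\<in>ball 0 1. (\<lambda>m. c m * fb b m z) sums g z))"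

text \<open>The unitary U : H_k \<rightarrow> H^2 with U f_m = z^m, and its adjoint (= inverse)
  U^* : H^2 \<rightarrow> H_k with U^* z^m = f_m.\<close>
definition Uk :: "(nat \<Rightarrow> complex) \<Rightarrow> (complex \<Rightarrow> complex) \<Rightarrow> (complex \<Rightarrow> complex)" where
  "Uk b g = (\<lambda>z. if z \<in> ball 0 1 then (\<Sum>m. hk_coeff b g m * z ^ m) else 0)"

definition Uk_adj :: "(nat \<Rightarrow> complex) \<Rightarrow> (complex \<Rightarrow> complex) \<Rightarrow> (complex \<Rightarrow> complex)" where
  "Uk_adj b h = (\<lambda>z. if z \<in> ball 0 1 then (\<Sum>m. h2coeff h m * fb b m z) else 0)"

definition Mz :: "(complex \<Rightarrow> complex) \<Rightarrow> (complex \<Rightarrow> complex)" where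
  "Mz g = (\<lambda>z. z * g z)"

definition Sn :: "(nat \<Rightarrow> complex) \<Rightarrow> (complex \<Rightarrow> complex) \<Rightarrow> (complex \<Rightarrow> complex)" where
  "Sn b h = Uk b (Mz (Uk_adj b h))"

definition h2_closed_subspace :: "(complex \<Rightarrow> complex) set \<Rightarrow> bool" where
  "h2_closed_subspace M \<longleftrightarrow> M \<subseteq> H2 \<and> (\<lambda>z. 0) \<in> M
     \<and> (\<forall>f\<in>M. \<forall>g\<in>M. (\<lambda>z. f z + g z) \<in> M)
     \<and> (\<forall>a::complex. \<forall>f\<in>M. (\<lambda>z. a * f z) \<in> M)
     \<and> (\<forall>u f. (\<forall>k. u k \<in> M) \<longrightarrow> f \<in> H2 \<longrightarrow>
              (\<lambda>k. h2norm (\<lambda>z. u k z - f z)) \<longlonglongrightarrow> 0 \<longrightarrow> f \<in> M)"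

definition h2_bounded_op :: "((complex \<Rightarrow> complex) \<Rightarrow> (complex \<Rightarrow> complex)) \<Rightarrow> bool" where
  "h2_bounded_op X \<longleftrightarrow> (\<forall>f\<in>H2. X f \<in> H2)
     \<and> (\<forall>f\<in>H2. \<forall>g\<in>H2. X (\<lambda>z. f z + g z) = (\<lambda>z. X f z + X g z))
     \<and> (\<forall>a::complex. \<forall>f\<in>H2. X (\<lambda>z. a * f z) = (\<lambda>z. a * X f z))
     \<and> (\<exists>C. \<forall>f\<in>H2. h2norm (X f) \<le> C * h2norm f)"

end

theory Submission
  imports Defs "HOL-Complex_Analysis.Conformal_Mappings"
begin

text \<open>
  The change of basis from the \<open>f\<^sub>m\<close> to the monomials \<open>z\<^sup>m\<close> is bounded with bounded
  inverse because \<open>b\<close> has finite support, and it conjugates \<open>S\<^sub>n\<close> to the unilateral shift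
  \<open>S\<close>. Hyperinvariance survives such a similarity, so it suffices to treat \<open>S\<close>. An operator
  \<open>Y\<close> commuting with \<open>S\<close> is convolution with its symbol \<open>\<phi> = Y \<delta>\<^sub>0\<close>. For \<open>r < 1\<close> the
  dilated symbol \<open>(r\<^sup>i \<phi>\<^sub>i)\<close> is absolutely summable, so its convolution with \<open>h \<in> M\<close> is a
  norm limit of combinations of the \<open>S\<^sup>i h\<close> and lies in \<open>M\<close>. By the maximum modulus
  principle these convolution operators are bounded by the bound of \<open>Y\<close>, uniformly in \<open>r\<close>;
  hence the convolutions converge to \<open>Y h\<close> as \<open>r \<rightarrow> 1\<close>, and \<open>Y h \<in> M\<close> because \<open>M\<close> is
  closed.
\<close>


definition l2_norm :: "(nat \<Rightarrow> complex) \<Rightarrow> real" where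
  "l2_norm c = sqrt (\<Sum>m. (cmod (c m))^2)"

definition l2_partial_norm :: "nat \<Rightarrow> (nat \<Rightarrow> complex) \<Rightarrow> real" where
  "l2_partial_norm K c = L2_set (\<lambda>m. cmod (c m)) {..<K}"

definition truncate :: "nat \<Rightarrow> (nat \<Rightarrow> 'a::zero) \<Rightarrow> nat \<Rightarrow> 'a" where
  "truncate K u = (\<lambda>m. if m < K then u m else 0)"

definition tail :: "nat \<Rightarrow> (nat \<Rightarrow> 'a::zero) \<Rightarrow> nat \<Rightarrow> 'a" where
  "tail K u = (\<lambda>m. if m < K then 0 else u m)"

definition delta0 :: "nat \<Rightarrow> complex" where
  "delta0 = (\<lambda>m. if m = 0 then 1 else 0)"

lemma l2_partial_norm_nonneg: "0 \<le> l2_partial_norm K c"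
  by (simp add: l2_partial_norm_def)

lemma l2_partial_norm_square: "(l2_partial_norm K c)^2 = (\<Sum>m<K. (cmod (c m))^2)"
  unfolding l2_partial_norm_def L2_set_def by (simp add: sum_nonneg)

lemma l2_norm_nonneg: "c \<in> l2 \<Longrightarrow> 0 \<le> l2_norm c"
  by (simp add: l2_norm_def l2_def suminf_nonneg)

lemma l2_norm_diff_commute: "l2_norm (\<lambda>m. u m - v m) = l2_norm (\<lambda>m. v m - u m)"
  by (simp add: l2_norm_def norm_minus_commute)

lemma l2_partial_norm_le_l2_norm:
  assumes "c \<in> l2"
  shows "l2_partial_norm K c \<le> l2_norm c"
proof -
  have "(\<Sum>m<K. (cmod (c m))^2) \<le> (\<Sum>m. (cmod (c m))^2)"
    by (rule sum_le_suminf) (use assms in \<open>auto simp: l2_def\<close>)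
  then show ?thesis
    unfolding l2_norm_def l2_partial_norm_def L2_set_def by (simp add: real_sqrt_le_mono)
qed

lemma l2_if_partial_norms_bounded:
  assumes "\<And>K. l2_partial_norm K c \<le> B"
  shows "c \<in> l2" "l2_norm c \<le> B"
proof -
  have "0 \<le> B"
    using assms[of 0] by (simp add: l2_partial_norm_def)
  have partial_sums: "(\<Sum>m<K. (cmod (c m))^2) \<le> B^2" for K
    using power_mono[OF assms[of K] l2_partial_norm_nonneg, of 2] by (simp add: l2_partial_norm_square)
  have summable: "summable (\<lambda>m. (cmod (c m))^2)"
    by (rule summableI_nonneg_bounded[where x="B^2"]) (use partial_sums in auto)
  then show "c \<in> l2"
    by (simp add: l2_def)
  have "(\<Sum>m. (cmod (c m))^2) \<le> B^2"
    by (rule suminf_le_const[OF summable partial_sums])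
  then have "l2_norm c \<le> sqrt (B^2)"
    unfolding l2_norm_def using real_sqrt_le_mono by blast
  then show "l2_norm c \<le> B"
    using \<open>0 \<le> B\<close> by simp
qed

lemma norm_le_l2_norm:
  assumes "c \<in> l2"
  shows "cmod (c m) \<le> l2_norm c"
proof -
  have "cmod (c m) \<le> l2_partial_norm (Suc m) c"
    unfolding l2_partial_norm_def by (rule member_le_L2_set) auto
  then show ?thesis
    using l2_partial_norm_le_l2_norm[OF assms, of "Suc m"] by linarith
qed

lemma l2_dominated:
  assumes "v \<in> l2" "0 \<le> \<beta>" "\<And>m. cmod (u m) \<le> \<beta> * cmod (v m)"
  shows "u \<in> l2" "l2_norm u \<le> \<beta> * l2_norm v"
proof -
  have "l2_partial_norm K u \<le> \<beta> * l2_norm v" for K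
  proof -
    have "l2_partial_norm K u \<le> L2_set (\<lambda>m. \<beta> * cmod (v m)) {..<K}"
      unfolding l2_partial_norm_def by (rule L2_set_mono) (use assms in auto)
    also have "\<dots> = \<beta> * l2_partial_norm K v"
      unfolding l2_partial_norm_def by (simp add: L2_set_right_distrib assms)
    also have "\<dots> \<le> \<beta> * l2_norm v"
      using l2_partial_norm_le_l2_norm[OF assms(1)] assms(2) by (simp add: mult_left_mono)
    finally show ?thesis .
  qed
  then show "u \<in> l2" "l2_norm u \<le> \<beta> * l2_norm v"
    using l2_if_partial_norms_bounded by auto
qed

lemma l2_add:
  assumes "c \<in> l2" "d \<in> l2"
  shows "(\<lambda>m. c m + d m) \<in> l2" "l2_norm (\<lambda>m. c m + d m) \<le> l2_norm c + l2_norm d"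
proof -
  have "l2_partial_norm K (\<lambda>m. c m + d m) \<le> l2_norm c + l2_norm d" for K
  proof -
    have "l2_partial_norm K (\<lambda>m. c m + d m) \<le> L2_set (\<lambda>m. cmod (c m) + cmod (d m)) {..<K}"
      unfolding l2_partial_norm_def by (rule L2_set_mono) (auto simp: norm_triangle_ineq)
    also have "\<dots> \<le> l2_partial_norm K c + l2_partial_norm K d"
      unfolding l2_partial_norm_def by (rule L2_set_triangle_ineq)
    also have "\<dots> \<le> l2_norm c + l2_norm d"
      using l2_partial_norm_le_l2_norm assms by (meson add_mono)
    finally show ?thesis .
  qed
  then show "(\<lambda>m. c m + d m) \<in> l2" "l2_norm (\<lambda>m. c m + d m) \<le> l2_norm c + l2_norm d"
    using l2_if_partial_norms_bounded by auto
qed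

lemma l2_scale:
  assumes "c \<in> l2"
  shows "(\<lambda>m. a * c m) \<in> l2" "l2_norm (\<lambda>m. a * c m) \<le> cmod a * l2_norm c"
  using l2_dominated[OF assms, of "cmod a" "\<lambda>m. a * c m"] by (auto simp: norm_mult)

lemma l2_uminus:
  assumes "c \<in> l2"
  shows "(\<lambda>m. - c m) \<in> l2" "l2_norm (\<lambda>m. - c m) = l2_norm c"
  using assms by (auto simp: l2_def l2_norm_def)

lemma l2_diff:
  assumes "c \<in> l2" "d \<in> l2"
  shows "(\<lambda>m. c m - d m) \<in> l2" "l2_norm (\<lambda>m. c m - d m) \<le> l2_norm c + l2_norm d"
  using l2_add[OF assms(1) l2_uminus(1)[OF assms(2)]] l2_uminus(2)[OF assms(2)] by auto

lemma l2_finite_support: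
  assumes "\<And>m. K \<le> m \<Longrightarrow> u m = 0"
  shows "u \<in> l2" "l2_norm u \<le> l2_partial_norm K u" "l2_norm u \<le> (\<Sum>m<K. cmod (u m))"
proof -
  have "l2_partial_norm J u \<le> l2_partial_norm K u" for J
  proof -
    have "(\<Sum>m<J. (cmod (u m))^2) \<le> (\<Sum>m<max J K. (cmod (u m))^2)"
      by (rule sum_mono2) auto
    also have "\<dots> = (\<Sum>m<K. (cmod (u m))^2)"
      by (rule sum.mono_neutral_right) (use assms in auto)
    finally have "(l2_partial_norm J u)^2 \<le> (l2_partial_norm K u)^2"
      by (simp add: l2_partial_norm_square)
    then show ?thesis
      by (rule power2_le_imp_le) (rule l2_partial_norm_nonneg)
  qed
  then show "u \<in> l2" "l2_norm u \<le> l2_partial_norm K u"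
    using l2_if_partial_norms_bounded by auto
  moreover have "l2_partial_norm K u \<le> (\<Sum>m<K. cmod (u m))"
    unfolding l2_partial_norm_def by (rule L2_set_le_sum) auto
  ultimately show "l2_norm u \<le> (\<Sum>m<K. cmod (u m))"
    by linarith
qed

lemma l2_zero: "(\<lambda>m. 0) \<in> l2" "l2_norm (\<lambda>m. 0) = 0"
  by (simp_all add: l2_def l2_norm_def)

lemma l2_truncate: "truncate K u \<in> l2"
  by (rule l2_finite_support[of K]) (simp add: truncate_def)

lemma l2_norm_truncate: "l2_norm (truncate K u) = l2_partial_norm K u"
proof -
  have "l2_partial_norm K (truncate K u) = l2_partial_norm K u"
    unfolding l2_partial_norm_def by (rule L2_set_cong) (auto simp: truncate_def)
  moreover have "l2_norm (truncate K u) \<le> l2_partial_norm K (truncate K u)"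
    by (rule l2_finite_support(2)) (simp add: truncate_def)
  moreover have "l2_partial_norm K (truncate K u) \<le> l2_norm (truncate K u)"
    by (rule l2_partial_norm_le_l2_norm[OF l2_truncate])
  ultimately show ?thesis
    by linarith
qed

lemma l2_tail:
  assumes "u \<in> l2"
  shows "tail K u \<in> l2"
  by (rule l2_dominated[OF assms, of 1]) (auto simp: tail_def)

lemma l2_delta0: "delta0 \<in> l2" "l2_norm delta0 = 1"
proof -
  show "delta0 \<in> l2"
    by (rule l2_finite_support[of 1]) (simp add: delta0_def)
  have "(\<lambda>m. (cmod (delta0 m))^2) = (\<lambda>m. if m = 0 then 1 else 0)"
    by (auto simp: delta0_def)
  then show "l2_norm delta0 = 1"
    using sums_single[of 0 "\<lambda>_. 1::real"] by (simp add: l2_norm_def sums_iff)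
qed

lemma tail_sums:
  fixes f :: "nat \<Rightarrow> 'a::real_normed_vector"
  assumes "summable f"
  shows "tail K f sums (suminf f - (\<Sum>m<K. f m))"
proof -
  have "(\<lambda>m. if m < K then f m else 0) sums (\<Sum>m<K. f m)"
    using sums_If_finite_set[of "{..<K}" f] by simp
  from sums_diff[OF summable_sums[OF assms] this] show ?thesis
    by (simp add: tail_def if_distrib cong: if_cong)
qed

lemma suminf_tail_tendsto_0:
  fixes f :: "nat \<Rightarrow> 'a::real_normed_vector"
  assumes "summable f"
  shows "(\<lambda>K. suminf (tail K f)) \<longlonglongrightarrow> 0"
proof -
  have "(\<lambda>K. suminf f - (\<Sum>m<K. f m)) \<longlonglongrightarrow> suminf f - suminf f"
    by (intro tendsto_intros summable_LIMSEQ assms)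
  then show ?thesis
    using tail_sums[OF assms] by (simp add: sums_iff)
qed

lemma l2_norm_tail_tendsto_0:
  assumes "u \<in> l2"
  shows "(\<lambda>K. l2_norm (tail K u)) \<longlonglongrightarrow> 0"
proof -
  have "(\<lambda>m. (cmod (tail K u m))^2) = tail K (\<lambda>m. (cmod (u m))^2)" for K
    by (auto simp: tail_def)
  moreover have "(\<lambda>K. sqrt (suminf (tail K (\<lambda>m. (cmod (u m))^2)))) \<longlonglongrightarrow> sqrt 0"
    by (intro tendsto_real_sqrt suminf_tail_tendsto_0) (use assms in \<open>simp add: l2_def\<close>)
  ultimately show ?thesis
    by (simp add: l2_norm_def)
qed

lemma l2_norm_tendsto_0_dominated:
  assumes "\<And>k. x k \<in> l2" "\<And>k. l2_norm (x k) \<le> g k" "g \<longlonglongrightarrow> 0"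
  shows "(\<lambda>k. l2_norm (x k)) \<longlonglongrightarrow> 0"
  by (rule tendsto_sandwich[OF _ _ tendsto_const assms(3)]) (use assms l2_norm_nonneg in auto)

lemma l2_sum:
  assumes "finite I" "\<And>i. i \<in> I \<Longrightarrow> u i \<in> l2"
  shows "(\<lambda>j. \<Sum>i\<in>I. u i j) \<in> l2 \<and>
    l2_norm (\<lambda>j. \<Sum>i\<in>I. u i j) \<le> (\<Sum>i\<in>I. l2_norm (u i))"
  using assms
proof (induction I rule: finite_induct)
  case empty
  then show ?case
    using l2_zero by simp
next
  case (insert x I)
  then have IH: "(\<lambda>j. \<Sum>i\<in>I. u i j) \<in> l2"
      "l2_norm (\<lambda>j. \<Sum>i\<in>I. u i j) \<le> (\<Sum>i\<in>I. l2_norm (u i))"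
    and ux: "u x \<in> l2"
    by auto
  have "(\<lambda>j. \<Sum>i\<in>insert x I. u i j) = (\<lambda>j. u x j + (\<Sum>i\<in>I. u i j))"
    using insert.hyps by simp
  then show ?case
    using l2_add[OF ux IH(1)] IH(2) insert.hyps by simp
qed

lemma cauchy_schwarz_l2:
  assumes "u \<in> l2" "v \<in> l2"
  shows "cmod (\<Sum>j<K. u j * cnj (v j)) \<le> l2_norm u * l2_norm v"
proof -
  have "cmod (\<Sum>j<K. u j * cnj (v j)) \<le> (\<Sum>j<K. \<bar>cmod (u j)\<bar> * \<bar>cmod (v j)\<bar>)"
    using norm_sum[of "\<lambda>j. u j * cnj (v j)" "{..<K}"] by (simp add: norm_mult)
  also have "\<dots> \<le> l2_partial_norm K u * l2_partial_norm K v"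
    unfolding l2_partial_norm_def by (rule L2_set_mult_ineq)
  also have "\<dots> \<le> l2_norm u * l2_norm v"
    using assms by (intro mult_mono l2_partial_norm_le_l2_norm l2_norm_nonneg l2_partial_norm_nonneg)
  finally show ?thesis .
qed

lemma norm_sum_mult_cnj_self: "cmod (\<Sum>j<K. v j * cnj (v j)) = (l2_partial_norm K v)^2"
proof -
  have "(\<Sum>j<K. v j * cnj (v j)) = of_real (\<Sum>j<K. (cmod (v j))^2)"
    unfolding of_real_sum by (rule sum.cong[OF refl]) (rule complex_norm_square[symmetric])
  moreover have "0 \<le> (\<Sum>j<K. (cmod (v j))^2)"
    by (simp add: sum_nonneg)
  ultimately show ?thesis
    by (simp only: norm_of_real l2_partial_norm_square abs_of_nonneg)
qed


definition l2_bounded_op :: "((nat \<Rightarrow> complex) \<Rightarrow> nat \<Rightarrow> complex) \<Rightarrow> real \<Rightarrow> bool" where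
  "l2_bounded_op Y C \<longleftrightarrow> (\<forall>u\<in>l2. Y u \<in> l2)
     \<and> (\<forall>u\<in>l2. \<forall>v\<in>l2. Y (\<lambda>m. u m + v m) = (\<lambda>m. Y u m + Y v m))
     \<and> (\<forall>a. \<forall>u\<in>l2. Y (\<lambda>m. a * u m) = (\<lambda>m. a * Y u m))
     \<and> (\<forall>u\<in>l2. l2_norm (Y u) \<le> C * l2_norm u)"

definition l2_closed_subspace :: "(nat \<Rightarrow> complex) set \<Rightarrow> bool" where
  "l2_closed_subspace N \<longleftrightarrow> N \<subseteq> l2 \<and> (\<lambda>m. 0) \<in> N
     \<and> (\<forall>u\<in>N. \<forall>v\<in>N. (\<lambda>m. u m + v m) \<in> N) \<and> (\<forall>a. \<forall>u\<in>N. (\<lambda>m. a * u m) \<in> N)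
     \<and> (\<forall>u f. (\<forall>k. u k \<in> N) \<longrightarrow> f \<in> l2 \<longrightarrow>
          (\<lambda>k. l2_norm (\<lambda>m. u k m - f m)) \<longlonglongrightarrow> 0 \<longrightarrow> f \<in> N)"

lemma
  assumes "l2_bounded_op Y C"
  shows l2_bounded_op_l2: "u \<in> l2 \<Longrightarrow> Y u \<in> l2"
    and l2_bounded_op_add: "u \<in> l2 \<Longrightarrow> v \<in> l2 \<Longrightarrow> Y (\<lambda>m. u m + v m) = (\<lambda>m. Y u m + Y v m)"
    and l2_bounded_op_scale: "u \<in> l2 \<Longrightarrow> Y (\<lambda>m. a * u m) = (\<lambda>m. a * Y u m)"
    and l2_bounded_op_norm: "u \<in> l2 \<Longrightarrow> l2_norm (Y u) \<le> C * l2_norm u"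
  using assms by (simp_all add: l2_bounded_op_def)

lemma
  assumes "l2_closed_subspace N"
  shows l2_closed_subspace_l2: "u \<in> N \<Longrightarrow> u \<in> l2"
    and l2_closed_subspace_zero: "(\<lambda>m. 0) \<in> N"
    and l2_closed_subspace_add: "u \<in> N \<Longrightarrow> v \<in> N \<Longrightarrow> (\<lambda>m. u m + v m) \<in> N"
    and l2_closed_subspace_scale: "u \<in> N \<Longrightarrow> (\<lambda>m. a * u m) \<in> N"
  using assms unfolding l2_closed_subspace_def by blast+

lemma l2_closed_subspace_limit:
  assumes "l2_closed_subspace N" "\<And>k. u k \<in> N" "f \<in> l2"
    "(\<lambda>k. l2_norm (\<lambda>m. u k m - f m)) \<longlonglongrightarrow> 0"
  shows "f \<in> N"
  using assms unfolding l2_closed_subspace_def by blast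

lemma l2_bounded_op_diff:
  assumes "l2_bounded_op Y C" "u \<in> l2" "v \<in> l2"
  shows "Y (\<lambda>m. u m - v m) = (\<lambda>m. Y u m - Y v m)"
  using l2_bounded_op_add[OF assms(1,2) l2_scale(1)[OF assms(3), of "-1"]]
    l2_bounded_op_scale[OF assms(1,3), of "-1"]
  by simp

lemma l2_bounded_op_zero:
  assumes "l2_bounded_op Y C"
  shows "Y (\<lambda>m. 0) = (\<lambda>m. 0)"
  using l2_bounded_op_scale[OF assms l2_zero(1), of 0] by simp

lemma l2_bounded_op_nonneg:
  assumes "l2_bounded_op Y C"
  shows "0 \<le> C"
  using l2_bounded_op_norm[OF assms l2_delta0(1)] l2_bounded_op_l2[OF assms l2_delta0(1)]
  by (simp add: l2_delta0(2) order_trans[OF l2_norm_nonneg])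

lemma l2_bounded_op_comp:
  assumes Y: "l2_bounded_op Y C" and Z: "l2_bounded_op Z D"
  shows "l2_bounded_op (\<lambda>u. Y (Z u)) (C * D)"
  unfolding l2_bounded_op_def
proof (intro conjI ballI allI)
  fix u assume u: "u \<in> l2"
  show "Y (Z u) \<in> l2"
    using u Y Z by (simp add: l2_bounded_op_l2)
  have "l2_norm (Y (Z u)) \<le> C * l2_norm (Z u)"
    by (rule l2_bounded_op_norm[OF Y l2_bounded_op_l2[OF Z u]])
  also have "\<dots> \<le> C * (D * l2_norm u)"
    by (rule mult_left_mono[OF l2_bounded_op_norm[OF Z u] l2_bounded_op_nonneg[OF Y]])
  finally show "l2_norm (Y (Z u)) \<le> C * D * l2_norm u"
    by (simp add: mult.assoc)
next
  fix u v assume "u \<in> l2" "v \<in> l2"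
  then show "Y (Z (\<lambda>m. u m + v m)) = (\<lambda>m. Y (Z u) m + Y (Z v) m)"
    using Y Z by (simp add: l2_bounded_op_add l2_bounded_op_l2)
next
  fix a u assume "u \<in> l2"
  then show "Y (Z (\<lambda>m. a * u m)) = (\<lambda>m. a * Y (Z u) m)"
    using Y Z by (simp add: l2_bounded_op_scale l2_bounded_op_l2)
qed

lemma l2_closed_subspace_sum:
  fixes K :: nat
  assumes "l2_closed_subspace N" "\<And>i. u i \<in> N"
  shows "(\<lambda>j. \<Sum>i<K. u i j) \<in> N"
proof (induction K)
  case 0
  then show ?case
    using l2_closed_subspace_zero[OF assms(1)] by simp
next
  case (Suc K)
  then show ?case
    using l2_closed_subspace_add[OF assms(1) Suc assms(2)[of K]] by simp
qed

lemma image_eq_preimage_if_inverse: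
  assumes "N \<subseteq> l2" "\<And>u. u \<in> l2 \<Longrightarrow> T u \<in> l2"
    and "\<And>u. u \<in> l2 \<Longrightarrow> T' (T u) = u" "\<And>u. u \<in> l2 \<Longrightarrow> T (T' u) = u"
  shows "T ` N = {u \<in> l2. T' u \<in> N}"
  using assms by (auto simp: image_iff) (metis subsetD)

lemma l2_closed_subspace_image:
  assumes N: "l2_closed_subspace N" and T: "l2_bounded_op T C" and T': "l2_bounded_op T' C'"
    and inv: "\<And>u. u \<in> l2 \<Longrightarrow> T' (T u) = u" "\<And>u. u \<in> l2 \<Longrightarrow> T (T' u) = u"
  shows "l2_closed_subspace (T ` N)"
proof -
  have image: "T ` N = {u \<in> l2. T' u \<in> N}"
    using image_eq_preimage_if_inverse[OF _ _ inv] l2_closed_subspace_l2[OF N] l2_bounded_op_l2[OF T]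
    by blast
  show ?thesis
    unfolding image l2_closed_subspace_def
  proof (intro conjI allI ballI impI)
    show "(\<lambda>m. 0) \<in> {u \<in> l2. T' u \<in> N}"
      using l2_zero(1) l2_bounded_op_zero[OF T'] l2_closed_subspace_zero[OF N] by simp
    show "(\<lambda>m. u m + v m) \<in> {u \<in> l2. T' u \<in> N}"
      if "u \<in> {u \<in> l2. T' u \<in> N}" "v \<in> {u \<in> l2. T' u \<in> N}" for u v
      using that l2_add(1) l2_bounded_op_add[OF T'] l2_closed_subspace_add[OF N] by simp
    show "(\<lambda>m. a * u m) \<in> {u \<in> l2. T' u \<in> N}"
      if "u \<in> {u \<in> l2. T' u \<in> N}" for a u
      using that l2_scale(1) l2_bounded_op_scale[OF T'] l2_closed_subspace_scale[OF N] by simp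
    fix u f
    assume u: "\<forall>k. u k \<in> {u \<in> l2. T' u \<in> N}" and f: "f \<in> l2"
      and lim: "(\<lambda>k. l2_norm (\<lambda>m. u k m - f m)) \<longlonglongrightarrow> 0"
    have u_l2: "u k \<in> l2" and T'u: "T' (u k) \<in> N" for k
      using u by simp_all
    have "(\<lambda>k. l2_norm (\<lambda>m. T' (u k) m - T' f m)) \<longlonglongrightarrow> 0"
    proof (rule l2_norm_tendsto_0_dominated)
      show "(\<lambda>m. T' (u k) m - T' f m) \<in> l2" for k
        using l2_diff(1) l2_bounded_op_l2[OF T'] u_l2 f by blast
      show "l2_norm (\<lambda>m. T' (u k) m - T' f m) \<le> C' * l2_norm (\<lambda>m. u k m - f m)" for k
        using l2_bounded_op_norm[OF T' l2_diff(1)[OF u_l2 f]] l2_bounded_op_diff[OF T' u_l2 f] by simp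
      show "(\<lambda>k. C' * l2_norm (\<lambda>m. u k m - f m)) \<longlonglongrightarrow> 0"
        using tendsto_mult_right_zero[OF lim] .
    qed
    then show "f \<in> {u \<in> l2. T' u \<in> N}"
      using l2_closed_subspace_limit[OF N, of "\<lambda>k. T' (u k)"] T'u l2_bounded_op_l2[OF T' f] f by blast
  qed auto
qed


definition shift :: "(nat \<Rightarrow> complex) \<Rightarrow> nat \<Rightarrow> complex" where
  "shift u = (\<lambda>m. case m of 0 \<Rightarrow> 0 | Suc k \<Rightarrow> u k)"

definition conv :: "(nat \<Rightarrow> complex) \<Rightarrow> (nat \<Rightarrow> complex) \<Rightarrow> nat \<Rightarrow> complex" where
  "conv a g = (\<lambda>j. \<Sum>i\<le>j. a i * g (j - i))"

definition dilate :: "complex \<Rightarrow> (nat \<Rightarrow> complex) \<Rightarrow> nat \<Rightarrow> complex" where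
  "dilate w u = (\<lambda>m. w ^ m * u m)"

lemma l2_shift:
  assumes "u \<in> l2"
  shows "shift u \<in> l2" "l2_norm (shift u) = l2_norm u"
proof -
  have "(\<lambda>m. (cmod (shift u (Suc m)))^2) sums (\<Sum>m. (cmod (u m))^2)"
    using assms by (simp add: shift_def l2_def summable_sums)
  then have "(\<lambda>m. (cmod (shift u m))^2) sums (\<Sum>m. (cmod (u m))^2)"
    by (subst (asm) sums_Suc_iff) (simp add: shift_def)
  then show "shift u \<in> l2" "l2_norm (shift u) = l2_norm u"
    by (auto simp: l2_def l2_norm_def sums_iff)
qed

lemma funpow_shift: "(shift ^^ i) u j = (if i \<le> j then u (j - i) else 0)"
  by (induction i arbitrary: j) (auto simp: shift_def split: nat.split)

lemma l2_funpow_shift: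
  assumes "u \<in> l2"
  shows "(shift ^^ i) u \<in> l2" "l2_norm ((shift ^^ i) u) = l2_norm u"
  by (induction i) (simp_all add: l2_shift assms)

lemma conv_diff: "conv a (\<lambda>m. g m - h m) = (\<lambda>j. conv a g j - conv a h j)"
  by (simp add: conv_def algebra_simps sum_subtractf)

lemma conv_truncate_tail: "conv a h = (\<lambda>j. conv (truncate K a) h j + conv (tail K a) h j)"
  by (auto simp: conv_def truncate_def tail_def fun_eq_iff sum.distrib[symmetric] intro!: sum.cong)

lemma conv_eq_shift_conv: "conv a g j = g 0 * a j + shift (conv a (\<lambda>m. g (Suc m))) j"
proof (cases j)
  case 0
  then show ?thesis
    by (simp add: conv_def shift_def)
next
  case (Suc k)
  have "conv a g j = (\<Sum>i\<le>k. a i * g (Suc k - i)) + a (Suc k) * g 0"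
    by (simp add: conv_def Suc)
  also have "(\<Sum>i\<le>k. a i * g (Suc k - i)) = (\<Sum>i\<le>k. a i * g (Suc (k - i)))"
    by (rule sum.cong) (auto simp: Suc_diff_le)
  finally show ?thesis
    by (simp add: Suc shift_def conv_def)
qed

lemma conv_truncate_eq_sum_funpow_shift:
  "conv (truncate K a) h = (\<lambda>j. \<Sum>i<K. a i * (shift ^^ i) h j)"
proof
  fix j
  have "conv (truncate K a) h j = (\<Sum>i\<in>{..j}. if i \<in> {..<K} then a i * h (j - i) else 0)"
    unfolding conv_def by (rule sum.cong) (simp_all add: truncate_def)
  also have "\<dots> = (\<Sum>i\<in>{..j} \<inter> {..<K}. a i * h (j - i))"
    by (rule sum.inter_restrict[symmetric]) simp
  also have "\<dots> = (\<Sum>i\<in>{..<K} \<inter> {..j}. a i * h (j - i))"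
    by (simp only: Int_commute)
  also have "\<dots> = (\<Sum>i<K. if i \<in> {..j} then a i * h (j - i) else 0)"
    by (rule sum.inter_restrict) simp
  also have "\<dots> = (\<Sum>i<K. a i * (shift ^^ i) h j)"
    unfolding funpow_shift by (rule sum.cong) auto
  finally show "conv (truncate K a) h j = (\<Sum>i<K. a i * (shift ^^ i) h j)" .
qed

lemma conv_l1_l2:
  assumes a: "summable (\<lambda>i. cmod (a i))" and h: "h \<in> l2"
  shows "conv a h \<in> l2" "l2_norm (conv a h) \<le> (\<Sum>i. cmod (a i)) * l2_norm h"
proof -
  have "l2_partial_norm J (conv a h) \<le> (\<Sum>i. cmod (a i)) * l2_norm h" for J
  proof -
    have terms: "(\<lambda>j. a i * (shift ^^ i) h j) \<in> l2"
      "l2_norm (\<lambda>j. a i * (shift ^^ i) h j) \<le> cmod (a i) * l2_norm h" for i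
      using l2_scale[OF l2_funpow_shift(1)[OF h, of i], of "a i"] l2_funpow_shift(2)[OF h, of i]
      by auto
    have sum: "(\<lambda>j. \<Sum>i<J. a i * (shift ^^ i) h j) \<in> l2 \<and>
        l2_norm (\<lambda>j. \<Sum>i<J. a i * (shift ^^ i) h j)
          \<le> (\<Sum>i<J. l2_norm (\<lambda>j. a i * (shift ^^ i) h j))"
      by (rule l2_sum) (simp_all add: terms)
    have "l2_partial_norm J (conv a h) = l2_partial_norm J (conv (truncate J a) h)"
      unfolding l2_partial_norm_def
      by (rule L2_set_cong) (auto simp: conv_def truncate_def intro!: sum.cong)
    also have "\<dots> \<le> l2_norm (conv (truncate J a) h)"
      unfolding conv_truncate_eq_sum_funpow_shift using sum by (intro l2_partial_norm_le_l2_norm) simp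
    also have "\<dots> \<le> (\<Sum>i<J. cmod (a i) * l2_norm h)"
      unfolding conv_truncate_eq_sum_funpow_shift using sum terms(2) sum_mono order_trans by meson
    also have "\<dots> \<le> (\<Sum>i. cmod (a i)) * l2_norm h"
      unfolding sum_distrib_right[symmetric]
      by (rule mult_right_mono[OF sum_le_suminf[OF a]]) (auto simp: l2_norm_nonneg[OF h])
    finally show ?thesis .
  qed
  then show "conv a h \<in> l2" "l2_norm (conv a h) \<le> (\<Sum>i. cmod (a i)) * l2_norm h"
    using l2_if_partial_norms_bounded by auto
qed

lemma dilate_1 [simp]: "dilate 1 u = u"
  by (simp add: dilate_def)

lemma dilate_dilate: "dilate v (dilate w u) = dilate (v * w) u"
  by (simp add: dilate_def power_mult_distrib mult.assoc)

lemma conv_dilate: "conv (dilate w a) (dilate w h) = dilate w (conv a h)"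
proof
  fix j
  have "w ^ i * w ^ (j - i) = w ^ j" if "i \<le> j" for i
    using that by (simp add: power_add[symmetric])
  then show "conv (dilate w a) (dilate w h) j = dilate w (conv a h) j"
    unfolding conv_def dilate_def sum_distrib_left
    by (intro sum.cong) (auto simp: mult_ac)
qed

lemma l2_dilate:
  assumes "u \<in> l2" "cmod w \<le> 1"
  shows "dilate w u \<in> l2" "l2_norm (dilate w u) \<le> l2_norm u"
proof -
  have "cmod (dilate w u m) \<le> 1 * cmod (u m)" for m
    using assms(2) by (simp add: dilate_def norm_mult norm_power mult_left_le_one_le power_le_one)
  then show "dilate w u \<in> l2" "l2_norm (dilate w u) \<le> l2_norm u"
    using l2_dominated[OF assms(1), of 1] by auto
qed

lemma summable_norm_dilate:
  assumes "u \<in> l2" "cmod w < 1"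
  shows "summable (\<lambda>i. cmod (dilate w u i))"
proof (rule summable_comparison_test)
  have "cmod (dilate w u i) \<le> l2_norm u * cmod w ^ i" for i
    unfolding dilate_def norm_mult norm_power
    using mult_right_mono[OF norm_le_l2_norm[OF assms(1), of i], of "cmod w ^ i"] by (simp add: mult.commute)
  then show "\<exists>N. \<forall>i\<ge>N. norm (cmod (dilate w u i)) \<le> l2_norm u * cmod w ^ i"
    by simp
  show "summable (\<lambda>i. l2_norm u * cmod w ^ i)"
    using assms(2) by (simp add: summable_geometric)
qed

lemma l2_norm_dilate_diff_le:
  assumes u: "u \<in> l2" and w: "cmod w \<le> 1"
  shows "l2_norm (\<lambda>j. dilate w u j - u j)
    \<le> (\<Sum>j<K. cmod (w ^ j - 1) * cmod (u j)) + 2 * l2_norm (tail K u)"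
proof -
  define A where "A = truncate K (\<lambda>j. (w ^ j - 1) * u j)"
  define B where "B = (\<lambda>j. (w ^ j - 1) * tail K u j)"
  have split: "(\<lambda>j. dilate w u j - u j) = (\<lambda>j. A j + B j)"
    by (auto simp: A_def B_def dilate_def truncate_def tail_def algebra_simps)
  have A: "A \<in> l2" "l2_norm A \<le> (\<Sum>j<K. cmod (w ^ j - 1) * cmod (u j))"
    using l2_finite_support[of K A] by (auto simp: A_def truncate_def norm_mult)
  have "cmod (B j) \<le> 2 * cmod (tail K u j)" for j
  proof -
    have "cmod (w ^ j - 1) \<le> cmod w ^ j + 1"
      using norm_triangle_ineq4[of "w ^ j" 1] by (simp add: norm_power)
    also have "\<dots> \<le> 2"
      using w by (simp add: power_le_one)
    finally show ?thesis
      by (simp add: B_def norm_mult mult_right_mono)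
  qed
  then have B: "B \<in> l2" "l2_norm B \<le> 2 * l2_norm (tail K u)"
    using l2_dominated[OF l2_tail[OF u], of 2 B] by auto
  show ?thesis
    unfolding split using l2_add(2)[OF A(1) B(1)] A(2) B(2) by linarith
qed

lemma dilate_tendsto:
  assumes u: "u \<in> l2" and w: "\<And>k. cmod (w k) \<le> 1" "w \<longlonglongrightarrow> 1"
  shows "(\<lambda>k. l2_norm (\<lambda>j. dilate (w k) u j - u j)) \<longlonglongrightarrow> 0"
proof (rule LIMSEQ_I)
  fix \<epsilon> :: real assume "0 < \<epsilon>"
  have "eventually (\<lambda>K. l2_norm (tail K u) < \<epsilon> / 4) sequentially"
    using order_tendstoD(2)[OF l2_norm_tail_tendsto_0[OF u], of "\<epsilon> / 4"] \<open>0 < \<epsilon>\<close> by simp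
  then obtain K where K: "l2_norm (tail K u) < \<epsilon> / 4"
    by (auto simp: eventually_sequentially)
  define f where "f k = (\<Sum>j<K. cmod (w k ^ j - 1) * cmod (u j))" for k
  have "f \<longlonglongrightarrow> (\<Sum>j<K. cmod (1 ^ j - 1) * cmod (u j))"
    unfolding f_def by (intro tendsto_intros w(2))
  then have "eventually (\<lambda>k. f k < \<epsilon> / 2) sequentially"
    using \<open>0 < \<epsilon>\<close> by (auto dest: order_tendstoD(2)[of _ 0 sequentially "\<epsilon> / 2"])
  then obtain k0 where k0: "\<And>k. k0 \<le> k \<Longrightarrow> f k < \<epsilon> / 2"
    by (auto simp: eventually_sequentially)
  have "\<bar>l2_norm (\<lambda>j. dilate (w k) u j - u j)\<bar> < \<epsilon>" if "k0 \<le> k" for k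
    using l2_norm_dilate_diff_le[OF u w(1), of k K] k0[OF that, unfolded f_def] K
      l2_norm_nonneg[OF l2_diff(1)[OF l2_dilate(1)[OF u w(1)[of k]] u]]
    by linarith
  then show "\<exists>k0. \<forall>k\<ge>k0. norm (l2_norm (\<lambda>j. dilate (w k) u j - u j) - 0) < \<epsilon>"
    by auto
qed


section \<open>Operators commuting with the shift\<close>

lemma shift_commuting_op_eq_conv_finite:
  assumes Y: "l2_bounded_op Y C" and comm: "\<forall>u\<in>l2. Y (shift u) = shift (Y u)"
    and g: "\<And>m. K \<le> m \<Longrightarrow> g m = 0"
  shows "Y g = conv (Y delta0) g"
  using g
proof (induction K arbitrary: g)
  case 0
  then have "g = (\<lambda>m. 0)"
    by auto
  then show ?case
    using l2_bounded_op_zero[OF Y] by (simp add: conv_def)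
next
  case (Suc K)
  define g' where "g' = (\<lambda>m. g (Suc m))"
  have g': "g' \<in> l2" "Y g' = conv (Y delta0) g'"
    using Suc l2_finite_support(1)[of K g'] by (simp_all add: g'_def)
  have "g = (\<lambda>m. g 0 * delta0 m + shift g' m)"
    by (auto simp: fun_eq_iff delta0_def shift_def g'_def split: nat.split)
  then have "Y g = Y (\<lambda>m. g 0 * delta0 m + shift g' m)"
    by (rule arg_cong)
  also have "\<dots> = (\<lambda>m. Y (\<lambda>m. g 0 * delta0 m) m + Y (shift g') m)"
    by (rule l2_bounded_op_add[OF Y l2_scale(1)[OF l2_delta0(1)] l2_shift(1)[OF g'(1)]])
  also have "\<dots> = (\<lambda>m. g 0 * Y delta0 m + shift (Y g') m)"
    using l2_bounded_op_scale[OF Y l2_delta0(1)] comm g'(1) by simp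
  also have "\<dots> = conv (Y delta0) g"
    unfolding g'(2) by (simp add: fun_eq_iff conv_eq_shift_conv[of _ g] g'_def)
  finally show ?case .
qed

lemma shift_commuting_op_eq_conv:
  assumes Y: "l2_bounded_op Y C" and comm: "\<forall>u\<in>l2. Y (shift u) = shift (Y u)" and g: "g \<in> l2"
  shows "Y g = conv (Y delta0) g"
proof
  fix j
  have bound: "cmod (Y g j - conv (Y delta0) g j) \<le> C * l2_norm (tail K g)" if "j < K" for K
  proof -
    have "conv (Y delta0) (truncate K g) j = conv (Y delta0) g j"
      unfolding conv_def truncate_def by (rule sum.cong) (use that in auto)
    moreover have "Y (truncate K g) = conv (Y delta0) (truncate K g)"
      by (rule shift_commuting_op_eq_conv_finite[OF Y comm, of K]) (simp add: truncate_def)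
    moreover have "(\<lambda>m. g m - truncate K g m) = tail K g"
      by (auto simp: truncate_def tail_def)
    then have "Y (tail K g) = (\<lambda>m. Y g m - Y (truncate K g) m)"
      using l2_bounded_op_diff[OF Y g l2_truncate[of K g]] by simp
    ultimately have "Y g j - conv (Y delta0) g j = Y (tail K g) j"
      by simp
    also have "cmod \<dots> \<le> l2_norm (Y (tail K g))"
      by (rule norm_le_l2_norm[OF l2_bounded_op_l2[OF Y l2_tail[OF g]]])
    also have "\<dots> \<le> C * l2_norm (tail K g)"
      by (rule l2_bounded_op_norm[OF Y l2_tail[OF g]])
    finally show ?thesis .
  qed
  have "(\<lambda>K. C * l2_norm (tail K g)) \<longlonglongrightarrow> 0"
    by (rule tendsto_mult_right_zero[OF l2_norm_tail_tendsto_0[OF g]])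
  moreover have "\<exists>K0. \<forall>K\<ge>K0. cmod (Y g j - conv (Y delta0) g j) \<le> C * l2_norm (tail K g)"
    using bound by (intro exI[of _ "Suc j"]) auto
  ultimately have "cmod (Y g j - conv (Y delta0) g j) \<le> 0"
    by (rule LIMSEQ_le_const)
  then show "Y g j = conv (Y delta0) g j"
    by simp
qed

lemma shift_commuting_op_conv_dilate_unimodular:
  assumes Y: "l2_bounded_op Y C" and comm: "\<forall>u\<in>l2. Y (shift u) = shift (Y u)"
    and g: "g \<in> l2" and z: "cmod z = 1"
  shows "conv (dilate z (Y delta0)) g = dilate z (Y (dilate (cnj z) g))"
proof -
  have "z * cnj z = 1"
    using complex_norm_square[of z] z by simp
  then have "conv (dilate z (Y delta0)) g = conv (dilate z (Y delta0)) (dilate z (dilate (cnj z) g))"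
    by (simp add: dilate_dilate)
  also have "\<dots> = dilate z (Y (dilate (cnj z) g))"
    using shift_commuting_op_eq_conv[OF Y comm l2_dilate(1)[OF g]] z by (simp add: conv_dilate)
  finally show ?thesis .
qed

text \<open>
  By the previous lemma the pairing below is bounded for \<open>|w| = 1\<close>; it is a polynomial in \<open>w\<close>,
  so the maximum modulus principle extends the bound to \<open>|w| \<le> 1\<close>.
\<close>

lemma shift_commuting_op_dilated_pairing_bound:
  assumes Y: "l2_bounded_op Y C" and comm: "\<forall>u\<in>l2. Y (shift u) = shift (Y u)"
    and g: "\<And>m. K \<le> m \<Longrightarrow> g m = 0" and \<psi>: "\<And>m. K \<le> m \<Longrightarrow> \<psi> m = 0" and w: "cmod w \<le> 1"
  shows "cmod (\<Sum>j<K. conv (dilate w (Y delta0)) g j * cnj (\<psi> j)) \<le> C * l2_norm g * l2_norm \<psi>"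
proof -
  define P where "P = (\<lambda>z. \<Sum>j<K. conv (dilate z (Y delta0)) g j * cnj (\<psi> j))"
  have g_l2: "g \<in> l2" and \<psi>_l2: "\<psi> \<in> l2"
    using l2_finite_support(1) g \<psi> by blast+
  have P_holo: "P holomorphic_on UNIV"
    unfolding P_def conv_def dilate_def by (intro holomorphic_intros)
  have circle: "cmod (P z) \<le> C * l2_norm g * l2_norm \<psi>" if z: "cmod z = 1" for z
  proof -
    let ?g = "dilate (cnj z) g"
    have g': "?g \<in> l2" "l2_norm ?g \<le> l2_norm g" and Yg: "Y ?g \<in> l2"
      using l2_dilate[OF g_l2, of "cnj z"] l2_bounded_op_l2[OF Y] z by simp_all
    have "cmod (P z) = cmod (\<Sum>j<K. dilate z (Y ?g) j * cnj (\<psi> j))"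
      by (simp add: P_def shift_commuting_op_conv_dilate_unimodular[OF Y comm g_l2 z])
    also have "\<dots> \<le> l2_norm (dilate z (Y ?g)) * l2_norm \<psi>"
      using cauchy_schwarz_l2 l2_dilate(1)[OF Yg] \<psi>_l2 z by simp
    also have "\<dots> \<le> C * l2_norm g * l2_norm \<psi>"
      using l2_dilate(2)[OF Yg, of z] z l2_bounded_op_norm[OF Y g'(1)]
        mult_left_mono[OF g'(2) l2_bounded_op_nonneg[OF Y]]
      by (intro mult_right_mono l2_norm_nonneg[OF \<psi>_l2]) simp
    finally show ?thesis .
  qed
  have "cmod (P w) \<le> C * l2_norm g * l2_norm \<psi>"
  proof (rule maximum_modulus_frontier[of P "cball 0 1"])
    show "P holomorphic_on interior (cball 0 1)" "continuous_on (closure (cball 0 1)) P"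
      using P_holo holomorphic_on_subset holomorphic_on_imp_continuous_on by blast+
    show "bounded (cball (0::complex) 1)" "w \<in> cball 0 1"
      using w by simp_all
    show "cmod (P z) \<le> C * l2_norm g * l2_norm \<psi>" if "z \<in> frontier (cball 0 1)" for z
      using that circle by simp
  qed
  then show ?thesis
    by (simp add: P_def)
qed

lemma shift_commuting_op_dilated_conv_bounded:
  assumes Y: "l2_bounded_op Y C" and comm: "\<forall>u\<in>l2. Y (shift u) = shift (Y u)"
    and g: "g \<in> l2" and w: "cmod w \<le> 1"
  shows "conv (dilate w (Y delta0)) g \<in> l2" "l2_norm (conv (dilate w (Y delta0)) g) \<le> C * l2_norm g"
proof -
  let ?a = "dilate w (Y delta0)"
  have "l2_partial_norm J (conv ?a g) \<le> C * l2_norm g" for J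
  proof -
    let ?v = "conv ?a g"
    have "conv ?a (truncate J g) j = ?v j" if "j < J" for j
      unfolding conv_def truncate_def by (rule sum.cong) (use that in auto)
    then have "(l2_partial_norm J ?v)^2 = cmod (\<Sum>j<J. conv ?a (truncate J g) j * cnj (truncate J ?v j))"
      using norm_sum_mult_cnj_self[where K=J and v="?v"] by (simp add: truncate_def)
    also have "\<dots> \<le> C * l2_norm (truncate J g) * l2_norm (truncate J ?v)"
      by (rule shift_commuting_op_dilated_pairing_bound[OF Y comm _ _ w]) (simp_all add: truncate_def)
    also have "\<dots> = C * l2_norm (truncate J g) * l2_partial_norm J ?v"
      by (simp add: l2_norm_truncate)
    also have "\<dots> \<le> C * l2_norm g * l2_partial_norm J ?v"
      using l2_partial_norm_le_l2_norm[OF g, of J]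
      by (intro mult_right_mono mult_left_mono l2_bounded_op_nonneg[OF Y] l2_partial_norm_nonneg)
        (simp_all add: l2_norm_truncate)
    finally have ineq:
        "l2_partial_norm J ?v * l2_partial_norm J ?v \<le> (C * l2_norm g) * l2_partial_norm J ?v"
      by (simp add: power2_eq_square)
    show ?thesis
    proof (cases "l2_partial_norm J ?v = 0")
      case True
      then show ?thesis
        using l2_bounded_op_nonneg[OF Y] l2_norm_nonneg[OF g] by simp
    next
      case False
      then show ?thesis
        using mult_right_le_imp_le[OF ineq] l2_partial_norm_nonneg[of J ?v] by simp
    qed
  qed
  then show "conv ?a g \<in> l2" "l2_norm (conv ?a g) \<le> C * l2_norm g"
    using l2_if_partial_norms_bounded by auto
qed

lemma shift_commuting_op_dilated_conv_tendsto:
  assumes Y: "l2_bounded_op Y C" and comm: "\<forall>u\<in>l2. Y (shift u) = shift (Y u)"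
    and h: "h \<in> l2" and w: "\<And>k. cmod (w k) \<le> 1" "w \<longlonglongrightarrow> 1"
  shows "(\<lambda>k. l2_norm (\<lambda>m. conv (dilate (w k) (Y delta0)) h m - Y h m)) \<longlonglongrightarrow> 0"
proof -
  let ?a = "\<lambda>k. dilate (w k) (Y delta0)"
  let ?d = "\<lambda>k m. dilate (w k) h m - h m"
  have Yh: "Y h = conv (Y delta0) h" and Yh_l2: "Y h \<in> l2"
    using shift_commuting_op_eq_conv[OF Y comm h] l2_bounded_op_l2[OF Y h] .
  have d_l2: "?d k \<in> l2" for k
    using l2_diff(1)[OF l2_dilate(1)[OF h w(1)] h] .
  have split: "(\<lambda>m. conv (?a k) h m - Y h m)
      = (\<lambda>m. (dilate (w k) (Y h) m - Y h m) - conv (?a k) (?d k) m)" for k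
    by (simp add: conv_diff conv_dilate Yh)
  have "l2_norm (\<lambda>m. conv (?a k) h m - Y h m)
      \<le> l2_norm (\<lambda>m. dilate (w k) (Y h) m - Y h m) + C * l2_norm (?d k)" for k
    unfolding split
    using l2_diff(2)[OF l2_diff(1)[OF l2_dilate(1)[OF Yh_l2 w(1)[of k]] Yh_l2]
        shift_commuting_op_dilated_conv_bounded(1)[OF Y comm d_l2[of k] w(1)[of k]]]
      shift_commuting_op_dilated_conv_bounded(2)[OF Y comm d_l2[of k] w(1)[of k]]
    by linarith
  moreover have
    "(\<lambda>k. l2_norm (\<lambda>m. dilate (w k) (Y h) m - Y h m) + C * l2_norm (?d k)) \<longlonglongrightarrow> 0"
    using tendsto_add[OF dilate_tendsto[OF Yh_l2 w] tendsto_mult_right_zero[OF dilate_tendsto[OF h w]]]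
    by simp
  moreover have "(\<lambda>m. conv (?a k) h m - Y h m) \<in> l2" for k
    using l2_diff(1)[OF shift_commuting_op_dilated_conv_bounded(1)[OF Y comm h w(1)] Yh_l2] .
  ultimately show ?thesis
    by (intro l2_norm_tendsto_0_dominated)
qed

lemma conv_in_shift_invariant_subspace:
  assumes N: "l2_closed_subspace N" and shift_N: "\<forall>u\<in>N. shift u \<in> N" and h: "h \<in> N"
    and a: "summable (\<lambda>i. cmod (a i))"
  shows "conv a h \<in> N"
proof -
  have h_l2: "h \<in> l2"
    using l2_closed_subspace_l2[OF N h] .
  have "(shift ^^ i) h \<in> N" for i
    by (induction i) (simp_all add: h shift_N)
  then have partial: "conv (truncate K a) h \<in> N" for K
    unfolding conv_truncate_eq_sum_funpow_shift
    by (intro l2_closed_subspace_sum[OF N] l2_closed_subspace_scale[OF N])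
  have norm_tail: "(\<lambda>i. cmod (tail K a i)) = tail K (\<lambda>i. cmod (a i))" for K
    by (auto simp: tail_def)
  have tail_a: "summable (\<lambda>i. cmod (tail K a i))" for K
    unfolding norm_tail using tail_sums[OF a] by (rule sums_summable)
  have "(\<lambda>K. l2_norm (\<lambda>m. conv (truncate K a) h m - conv a h m)) \<longlonglongrightarrow> 0"
  proof (rule l2_norm_tendsto_0_dominated)
    show "(\<lambda>m. conv (truncate K a) h m - conv a h m) \<in> l2" for K
      using l2_diff(1)[OF l2_closed_subspace_l2[OF N partial] conv_l1_l2(1)[OF a h_l2]] .
    have "(\<lambda>m. conv a h m - conv (truncate K a) h m) = conv (tail K a) h" for K
      by (rule ext) (simp add: conv_truncate_tail[of a h K, THEN fun_cong])
    then show "l2_norm (\<lambda>m. conv (truncate K a) h m - conv a h m)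
        \<le> suminf (tail K (\<lambda>i. cmod (a i))) * l2_norm h" for K
      using conv_l1_l2(2)[OF tail_a h_l2] by (simp add: l2_norm_diff_commute norm_tail)
    show "(\<lambda>K. suminf (tail K (\<lambda>i. cmod (a i))) * l2_norm h) \<longlonglongrightarrow> 0"
      by (rule tendsto_mult_left_zero[OF suminf_tail_tendsto_0[OF a]])
  qed
  then show ?thesis
    using l2_closed_subspace_limit[OF N, of "\<lambda>K. conv (truncate K a) h"] partial
      conv_l1_l2(1)[OF a h_l2]
    by blast
qed

theorem shift_invariant_subspace_hyperinvariant:
  assumes N: "l2_closed_subspace N" and shift_N: "\<forall>u\<in>N. shift u \<in> N"
    and Y: "l2_bounded_op Y C" and comm: "\<forall>u\<in>l2. Y (shift u) = shift (Y u)"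
  shows "\<forall>h\<in>N. Y h \<in> N"
proof
  fix h assume h: "h \<in> N"
  define r :: "nat \<Rightarrow> real" where "r k = 1 - 1 / (real k + 2)" for k
  have r: "0 \<le> r k" "r k < 1" for k
    by (simp_all add: r_def field_simps)
  have "(\<lambda>k. 1 / real (k + 2)) \<longlonglongrightarrow> 0"
    by (rule LIMSEQ_ignore_initial_segment[OF lim_1_over_n])
  then have "r \<longlonglongrightarrow> 1 - 0"
    unfolding r_def by (intro tendsto_diff tendsto_const) (simp add: add.commute)
  then have lim: "(\<lambda>k. complex_of_real (r k)) \<longlonglongrightarrow> 1"
    using tendsto_of_real by force
  have norm_r: "cmod (complex_of_real (r k)) < 1" for k
    using r[of k] by simp
  have "conv (dilate (r k) (Y delta0)) h \<in> N" for k
    by (rule conv_in_shift_invariant_subspace[OF N shift_N h summable_norm_dilate])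
      (use l2_bounded_op_l2[OF Y l2_delta0(1)] norm_r in auto)
  moreover have "(\<lambda>k. l2_norm (\<lambda>m. conv (dilate (r k) (Y delta0)) h m - Y h m)) \<longlonglongrightarrow> 0"
    using shift_commuting_op_dilated_conv_tendsto[OF Y comm l2_closed_subspace_l2[OF N h]
        less_imp_le[OF norm_r] lim] .
  ultimately show "Y h \<in> N"
    by (rule l2_closed_subspace_limit[OF N _ l2_bounded_op_l2[OF Y l2_closed_subspace_l2[OF N h]]])
qed


section \<open>Similarity\<close>

lemma conjugate_commutes:
  assumes S_l2: "\<forall>u\<in>l2. S u \<in> l2" and T: "l2_bounded_op T CT" and T': "l2_bounded_op T' CT'"
    and inv: "\<And>u. u \<in> l2 \<Longrightarrow> T (T' u) = u"
    and X: "l2_bounded_op X C" and comm: "\<forall>c\<in>l2. X (T' (S (T c))) = T' (S (T (X c)))"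
  shows "\<forall>u\<in>l2. T (X (T' (S u))) = S (T (X (T' u)))"
proof
  fix u assume u: "u \<in> l2"
  then have "T' (S u) = T' (S (T (T' u)))"
    by (simp add: inv)
  then have "T (X (T' (S u))) = T (T' (S (T (X (T' u)))))"
    using comm l2_bounded_op_l2[OF T' u] by simp
  also have "\<dots> = S (T (X (T' u)))"
    using inv S_l2 l2_bounded_op_l2[OF T] l2_bounded_op_l2[OF X] l2_bounded_op_l2[OF T' u] by simp
  finally show "T (X (T' (S u))) = S (T (X (T' u)))" .
qed

lemma similarity_preserves_hyperinvariance:
  assumes S_l2: "\<forall>u\<in>l2. S u \<in> l2"
    and S_hyper: "\<And>N Y C. l2_closed_subspace N \<Longrightarrow> \<forall>u\<in>N. S u \<in> N \<Longrightarrow> l2_bounded_op Y C \<Longrightarrow>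
      \<forall>u\<in>l2. Y (S u) = S (Y u) \<Longrightarrow> \<forall>h\<in>N. Y h \<in> N"
    and T: "l2_bounded_op T CT" and T': "l2_bounded_op T' CT'"
    and inv: "\<And>u. u \<in> l2 \<Longrightarrow> T' (T u) = u" "\<And>u. u \<in> l2 \<Longrightarrow> T (T' u) = u"
    and M: "l2_closed_subspace M" and A_M: "\<forall>c\<in>M. T' (S (T c)) \<in> M"
    and X: "l2_bounded_op X C" and comm: "\<forall>c\<in>l2. X (T' (S (T c))) = T' (S (T (X c)))"
  shows "\<forall>c\<in>M. X c \<in> M"
proof
  fix c assume c: "c \<in> M"
  have M_l2: "d \<in> M \<Longrightarrow> d \<in> l2" for d
    using l2_closed_subspace_l2[OF M] .
  have S_TM: "\<forall>u\<in>T ` M. S u \<in> T ` M"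
  proof
    fix u assume "u \<in> T ` M"
    then obtain d where d: "d \<in> M" "u = T d"
      by blast
    then have "S u = T (T' (S (T d)))"
      using inv(2) S_l2 l2_bounded_op_l2[OF T] M_l2 by simp
    then show "S u \<in> T ` M"
      using A_M d(1) by blast
  qed
  have "\<forall>u\<in>T ` M. T (X (T' u)) \<in> T ` M"
    by (rule S_hyper[OF l2_closed_subspace_image[OF M T T' inv] S_TM
          l2_bounded_op_comp[OF T l2_bounded_op_comp[OF X T']]
          conjugate_commutes[OF S_l2 T T' inv(2) X comm]])
  then have "T (X c) \<in> T ` M"
    using c inv(1) M_l2 by force
  then obtain d where "d \<in> M" "T (X c) = T d"
    by blast
  then show "X c \<in> M"
    using inv(1) l2_bounded_op_l2[OF X] M_l2 c by metis
qed


section \<open>The change of basis between \<open>f\<^sub>m\<close> and \<open>z\<^sup>m\<close>\<close>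

text \<open>\<open>fb_to_taylor b c\<close> are the Taylor coefficients of \<open>\<lambda>z. \<Sum>m. c m * fb b m z\<close>.\<close>

definition fb_to_taylor :: "(nat \<Rightarrow> complex) \<Rightarrow> (nat \<Rightarrow> complex) \<Rightarrow> nat \<Rightarrow> complex" where
  "fb_to_taylor b c = (\<lambda>m. c m + shift (\<lambda>k. b k * c k) m)"

fun taylor_to_fb :: "(nat \<Rightarrow> complex) \<Rightarrow> (nat \<Rightarrow> complex) \<Rightarrow> nat \<Rightarrow> complex" where
  "taylor_to_fb b d 0 = d 0"
| "taylor_to_fb b d (Suc k) = d (Suc k) - b k * taylor_to_fb b d k"

lemma fb_to_taylor_taylor_to_fb [simp]: "fb_to_taylor b (taylor_to_fb b d) = d"
proof
  fix m
  show "fb_to_taylor b (taylor_to_fb b d) m = d m"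
    by (cases m) (auto simp: fb_to_taylor_def shift_def)
qed

lemma taylor_to_fb_fb_to_taylor [simp]: "taylor_to_fb b (fb_to_taylor b c) = c"
proof
  fix m
  show "taylor_to_fb b (fb_to_taylor b c) m = c m"
    by (induction m) (auto simp: fb_to_taylor_def shift_def)
qed

lemma fb_to_taylor_add: "fb_to_taylor b (\<lambda>m. c m + d m) = (\<lambda>m. fb_to_taylor b c m + fb_to_taylor b d m)"
  by (auto simp: fb_to_taylor_def shift_def fun_eq_iff algebra_simps split: nat.split)

lemma fb_to_taylor_scale: "fb_to_taylor b (\<lambda>m. a * c m) = (\<lambda>m. a * fb_to_taylor b c m)"
  by (auto simp: fb_to_taylor_def shift_def fun_eq_iff algebra_simps split: nat.split)

lemma taylor_to_fb_add: "taylor_to_fb b (\<lambda>m. c m + d m) = (\<lambda>m. taylor_to_fb b c m + taylor_to_fb b d m)"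
  using arg_cong[OF fb_to_taylor_add[of b "taylor_to_fb b c" "taylor_to_fb b d"], of "taylor_to_fb b"]
  by simp

lemma taylor_to_fb_scale: "taylor_to_fb b (\<lambda>m. a * c m) = (\<lambda>m. a * taylor_to_fb b c m)"
  using arg_cong[OF fb_to_taylor_scale[of b a "taylor_to_fb b c"], of "taylor_to_fb b"]
  by simp

locale finitely_supported =
  fixes b :: "nat \<Rightarrow> complex" and n :: nat
  assumes vanishes: "\<And>t. n \<le> t \<Longrightarrow> b t = 0"
begin

definition bmax :: real where
  "bmax = (\<Sum>t<n. cmod (b t))"

lemma norm_le_bmax: "cmod (b t) \<le> bmax"
proof (cases "t < n")
  case True
  then show ?thesis
    unfolding bmax_def by (intro member_le_sum) auto
next
  case False
  then show ?thesis
    using vanishes[of t] by (simp add: bmax_def sum_nonneg)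
qed

lemma bmax_nonneg: "0 \<le> bmax"
  using norm_le_bmax[of 0] norm_ge_zero order_trans by blast

lemma l2_bounded_op_fb_to_taylor: "l2_bounded_op (fb_to_taylor b) (1 + bmax)"
  unfolding l2_bounded_op_def
proof (intro conjI ballI allI)
  fix c assume c: "c \<in> l2"
  have bc: "(\<lambda>k. b k * c k) \<in> l2" "l2_norm (\<lambda>k. b k * c k) \<le> bmax * l2_norm c"
    using l2_dominated[OF c bmax_nonneg, of "\<lambda>k. b k * c k"] norm_le_bmax
    by (auto simp: norm_mult mult_right_mono)
  show "fb_to_taylor b c \<in> l2"
    unfolding fb_to_taylor_def by (rule l2_add(1)[OF c l2_shift(1)[OF bc(1)]])
  have "l2_norm (fb_to_taylor b c) \<le> l2_norm c + l2_norm (shift (\<lambda>k. b k * c k))"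
    unfolding fb_to_taylor_def by (rule l2_add(2)[OF c l2_shift(1)[OF bc(1)]])
  then show "l2_norm (fb_to_taylor b c) \<le> (1 + bmax) * l2_norm c"
    using bc(2) l2_shift(2)[OF bc(1)] by (simp add: algebra_simps)
qed (simp_all add: fb_to_taylor_add fb_to_taylor_scale)

lemma norm_taylor_to_fb_le:
  assumes "d \<in> l2"
  shows "cmod (taylor_to_fb b d m) \<le> (1 + bmax) ^ m * l2_norm d"
proof (induction m)
  case 0
  then show ?case
    using norm_le_l2_norm[OF assms, of 0] by simp
next
  case (Suc k)
  have "cmod (taylor_to_fb b d (Suc k)) \<le> cmod (d (Suc k)) + cmod (b k) * cmod (taylor_to_fb b d k)"
    by (simp add: norm_mult order_trans[OF norm_triangle_ineq4])
  also have "\<dots> \<le> l2_norm d + bmax * ((1 + bmax) ^ k * l2_norm d)"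
    using norm_le_l2_norm[OF assms, of "Suc k"] Suc norm_le_bmax[of k] bmax_nonneg
    by (intro add_mono mult_mono) auto
  also have "\<dots> \<le> (1 + bmax) ^ Suc k * l2_norm d"
    using mult_right_mono[OF one_le_power[of "1 + bmax" k] l2_norm_nonneg[OF assms]] bmax_nonneg
    by (simp add: algebra_simps)
  finally show ?case .
qed

text \<open>
  Finite support of \<open>b\<close> is what makes the inverse bounded: the correction term
  \<open>b\<^sub>k (taylor_to_fb b d)\<^sub>k\<close> only lives on \<open>k < n\<close>, where the recursion has grown at
  most by a factor \<open>(1 + bmax)\<^sup>k\<close>.
\<close>

lemma l2_bounded_op_taylor_to_fb: "l2_bounded_op (taylor_to_fb b) (1 + (\<Sum>k<n. bmax * (1 + bmax) ^ k))"
  unfolding l2_bounded_op_def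
proof (intro conjI ballI allI)
  fix d assume d: "d \<in> l2"
  define u where "u = (\<lambda>k. b k * taylor_to_fb b d k)"
  have eq: "taylor_to_fb b d = (\<lambda>m. d m - shift u m)"
  proof
    fix m
    show "taylor_to_fb b d m = d m - shift u m"
      by (cases m) (auto simp: shift_def u_def)
  qed
  have u: "u \<in> l2" "l2_norm u \<le> (\<Sum>k<n. cmod (u k))"
    using l2_finite_support[of n u] vanishes by (auto simp: u_def)
  have "(\<Sum>k<n. cmod (u k)) \<le> (\<Sum>k<n. bmax * (1 + bmax) ^ k * l2_norm d)"
    using norm_le_bmax norm_taylor_to_fb_le[OF d] bmax_nonneg
    by (intro sum_mono) (auto simp: u_def norm_mult mult.assoc intro!: mult_mono)
  then have u_norm: "l2_norm u \<le> (\<Sum>k<n. bmax * (1 + bmax) ^ k) * l2_norm d"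
    using u(2) by (simp add: sum_distrib_right)
  show "taylor_to_fb b d \<in> l2"
    unfolding eq by (rule l2_diff(1)[OF d l2_shift(1)[OF u(1)]])
  have "l2_norm (taylor_to_fb b d) \<le> l2_norm d + l2_norm (shift u)"
    unfolding eq by (rule l2_diff(2)[OF d l2_shift(1)[OF u(1)]])
  then show "l2_norm (taylor_to_fb b d) \<le> (1 + (\<Sum>k<n. bmax * (1 + bmax) ^ k)) * l2_norm d"
    using u_norm l2_shift(2)[OF u(1)] by (simp add: algebra_simps)
qed (simp_all add: taylor_to_fb_add taylor_to_fb_scale)
end


section \<open>Taylor coefficients on \<open>H\<^sup>2\<close>\<close>

definition h2_fun :: "(nat \<Rightarrow> complex) \<Rightarrow> complex \<Rightarrow> complex" where
  "h2_fun c = (\<lambda>z. if z \<in> ball 0 1 then (\<Sum>m. c m * z ^ m) else 0)"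

lemma h2_fun_sums:
  assumes c: "c \<in> l2" and z: "z \<in> ball 0 1"
  shows "(\<lambda>m. c m * z ^ m) sums h2_fun c z"
proof -
  have "summable (\<lambda>m. c m * z ^ m)"
  proof (rule summable_comparison_test)
    show "\<exists>N. \<forall>m\<ge>N. norm (c m * z ^ m) \<le> l2_norm c * cmod z ^ m"
      using norm_le_l2_norm[OF c] by (auto simp: norm_mult norm_power intro!: mult_right_mono)
    show "summable (\<lambda>m. l2_norm c * cmod z ^ m)"
      using z by (simp add: summable_geometric)
  qed
  then show ?thesis
    using z by (simp add: h2_fun_def summable_sums)
qed

lemma powser_coeffs_unique:
  fixes c d :: "nat \<Rightarrow> complex"
  assumes c: "\<forall>z\<in>ball 0 1. (\<lambda>m. c m * z ^ m) sums f z"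
    and d: "\<forall>z\<in>ball 0 1. (\<lambda>m. d m * z ^ m) sums f z"
  shows "c = d"
proof
  fix k
  define e where "e m = c m - d m" for m
  have e: "(\<lambda>m. e m * z ^ m) sums 0" if "z \<in> ball 0 1" for z
    using sums_diff[OF c[rule_format, OF that] d[rule_format, OF that]] by (simp add: e_def left_diff_distrib)
  have "e k = 0"
  proof (induction k rule: less_induct)
    case (less k)
    have "(\<lambda>m. e (m + k) * z ^ m) sums 0" if "z \<noteq> 0" "cmod z < 1" for z
    proof -
      have "(\<lambda>m. e (m + k) * z ^ (m + k)) sums (0 - (\<Sum>i<k. e i * z ^ i))"
        using sums_split_initial_segment[OF e, of z k] that by simp
      then have "(\<lambda>m. e (m + k) * z ^ (m + k)) sums 0"
        using less by simp
      from sums_mult[OF this, of "1 / z ^ k"] show ?thesis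
        using that by (simp add: power_add field_simps)
    qed
    then have "((\<lambda>z::complex. 0) \<longlongrightarrow> e (0 + k)) (at 0)"
      by (intro powser_limit_0_strong[where s=1]) auto
    then have "0 = e (0 + k)"
      by (rule LIM_const_eq)
    then show "e k = 0"
      by simp
  qed
  then show "c k = d k"
    by (simp add: e_def)
qed

lemma h2coeff_h2_fun [simp]:
  assumes "c \<in> l2"
  shows "h2coeff (h2_fun c) = c"
  unfolding h2coeff_def
proof (rule the_equality)
  show "c \<in> l2 \<and> (\<forall>z\<in>ball 0 1. (\<lambda>m. c m * z ^ m) sums h2_fun c z)"
    using assms h2_fun_sums by auto
  fix c' assume "c' \<in> l2 \<and> (\<forall>z\<in>ball 0 1. (\<lambda>m. c' m * z ^ m) sums h2_fun c z)"
  then show "c' = c"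
    using powser_coeffs_unique h2_fun_sums[OF assms] by blast
qed

lemma h2_fun_in_H2:
  assumes "c \<in> l2"
  shows "h2_fun c \<in> H2"
proof -
  have "\<forall>z\<in>ball 0 1. (\<lambda>m. c m * z ^ m) sums h2_fun c z"
    using h2_fun_sums[OF assms] by blast
  moreover have "\<forall>z. z \<notin> ball 0 1 \<longrightarrow> h2_fun c z = 0"
    by (simp add: h2_fun_def)
  ultimately show ?thesis
    unfolding H2_def using assms by blast
qed

lemma H2_h2coeff:
  assumes "f \<in> H2"
  shows "h2coeff f \<in> l2" "h2_fun (h2coeff f) = f"
proof -
  obtain c where c: "c \<in> l2" "\<forall>z\<in>ball 0 1. (\<lambda>m. c m * z ^ m) sums f z"
    "\<forall>z. z \<notin> ball 0 1 \<longrightarrow> f z = 0"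
    using assms unfolding H2_def by blast
  have "h2_fun c = f"
  proof
    fix z
    show "h2_fun c z = f z"
      using c sums_unique2[OF h2_fun_sums[OF c(1)]] by (cases "z \<in> ball 0 1") (auto simp: h2_fun_def)
  qed
  then show "h2coeff f \<in> l2" "h2_fun (h2coeff f) = f"
    using c(1) by auto
qed

lemma h2norm_eq_l2_norm: "h2norm f = l2_norm (h2coeff f)"
  by (simp add: h2norm_def l2_norm_def)

lemma h2_fun_zero: "h2_fun (\<lambda>m. 0) = (\<lambda>z. 0)"
  by (simp add: h2_fun_def fun_eq_iff)

lemma h2_fun_add:
  assumes "c \<in> l2" "d \<in> l2"
  shows "h2_fun (\<lambda>m. c m + d m) = (\<lambda>z. h2_fun c z + h2_fun d z)"
proof
  fix z
  show "h2_fun (\<lambda>m. c m + d m) z = h2_fun c z + h2_fun d z"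
  proof (cases "z \<in> ball 0 1")
    case True
    have "(\<lambda>m. (c m + d m) * z ^ m) sums (h2_fun c z + h2_fun d z)"
      using sums_add[OF h2_fun_sums[OF assms(1) True] h2_fun_sums[OF assms(2) True]]
      by (simp add: distrib_right)
    then show ?thesis
      using h2_fun_sums[OF l2_add(1)[OF assms] True] sums_unique2 by blast
  qed (simp add: h2_fun_def)
qed

lemma h2_fun_scale:
  assumes "c \<in> l2"
  shows "h2_fun (\<lambda>m. a * c m) = (\<lambda>z. a * h2_fun c z)"
proof
  fix z
  show "h2_fun (\<lambda>m. a * c m) z = a * h2_fun c z"
  proof (cases "z \<in> ball 0 1")
    case True
    have "(\<lambda>m. (a * c m) * z ^ m) sums (a * h2_fun c z)"
      using sums_mult[OF h2_fun_sums[OF assms True], of a] by (simp add: mult.assoc)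
    then show ?thesis
      using h2_fun_sums[OF l2_scale(1)[OF assms] True] sums_unique2 by blast
  qed (simp add: h2_fun_def)
qed

lemma h2_fun_diff:
  assumes "c \<in> l2" "d \<in> l2"
  shows "h2_fun (\<lambda>m. c m - d m) = (\<lambda>z. h2_fun c z - h2_fun d z)"
  using h2_fun_add[OF assms(1) l2_scale(1)[OF assms(2), of "-1"]] h2_fun_scale[OF assms(2), of "-1"]
  by simp

lemma Mz_h2_fun:
  assumes d: "d \<in> l2"
  shows "Mz (h2_fun d) = h2_fun (shift d)"
proof
  fix z
  show "Mz (h2_fun d) z = h2_fun (shift d) z"
  proof (cases "z \<in> ball 0 1")
    case True
    have "(\<lambda>m. shift d (Suc m) * z ^ Suc m) sums (z * h2_fun d z)"
      using sums_mult[OF h2_fun_sums[OF d True], of z] by (simp add: shift_def mult_ac)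
    then have "(\<lambda>m. shift d m * z ^ m) sums (z * h2_fun d z)"
      by (subst (asm) sums_Suc_iff) (simp add: shift_def)
    then show ?thesis
      using h2_fun_sums[OF l2_shift(1)[OF d] True] sums_unique2 by (simp add: Mz_def)
  qed (simp add: h2_fun_def Mz_def)
qed

lemma h2coeff_image_eq:
  assumes "M \<subseteq> H2"
  shows "h2coeff ` M = {c \<in> l2. h2_fun c \<in> M}"
  using assms H2_h2coeff by (auto simp: image_iff) (metis h2coeff_h2_fun)

lemma l2_closed_subspace_h2coeff_image:
  assumes M: "h2_closed_subspace M"
  shows "l2_closed_subspace (h2coeff ` M)"
proof -
  have M_H2: "M \<subseteq> H2" and M_zero: "(\<lambda>z. 0) \<in> M"
    and M_add: "\<And>f g. f \<in> M \<Longrightarrow> g \<in> M \<Longrightarrow> (\<lambda>z. f z + g z) \<in> M"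
    and M_scale: "\<And>a f. f \<in> M \<Longrightarrow> (\<lambda>z. a * f z) \<in> M"
    and M_closed: "\<And>F f. \<forall>k. F k \<in> M \<Longrightarrow> f \<in> H2 \<Longrightarrow>
      (\<lambda>k. h2norm (\<lambda>z. F k z - f z)) \<longlonglongrightarrow> 0 \<Longrightarrow> f \<in> M"
    using M unfolding h2_closed_subspace_def by blast+
  show ?thesis
    unfolding h2coeff_image_eq[OF M_H2] l2_closed_subspace_def
  proof (intro conjI allI ballI impI)
    show "(\<lambda>m. 0) \<in> {c \<in> l2. h2_fun c \<in> M}"
      using l2_zero(1) M_zero by (simp add: h2_fun_zero)
    show "(\<lambda>m. u m + v m) \<in> {c \<in> l2. h2_fun c \<in> M}"
      if "u \<in> {c \<in> l2. h2_fun c \<in> M}" "v \<in> {c \<in> l2. h2_fun c \<in> M}" for u v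
      using that l2_add(1) M_add by (simp add: h2_fun_add)
    show "(\<lambda>m. a * u m) \<in> {c \<in> l2. h2_fun c \<in> M}"
      if "u \<in> {c \<in> l2. h2_fun c \<in> M}" for a u
      using that l2_scale(1) M_scale by (simp add: h2_fun_scale)
    fix u c
    assume u: "\<forall>k. u k \<in> {c \<in> l2. h2_fun c \<in> M}" and c: "c \<in> l2"
      and lim: "(\<lambda>k. l2_norm (\<lambda>m. u k m - c m)) \<longlonglongrightarrow> 0"
    have u_l2: "u k \<in> l2" and u_M: "h2_fun (u k) \<in> M" for k
      using u by simp_all
    have "h2norm (\<lambda>z. h2_fun (u k) z - h2_fun c z) = l2_norm (\<lambda>m. u k m - c m)" for k
      by (simp add: h2norm_eq_l2_norm h2_fun_diff[OF u_l2[of k] c, symmetric] l2_diff(1)[OF u_l2[of k] c])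
    then have "h2_fun c \<in> M"
      using M_closed[of "\<lambda>k. h2_fun (u k)"] u_M h2_fun_in_H2[OF c] lim by simp
    then show "c \<in> {c \<in> l2. h2_fun c \<in> M}"
      using c by simp
  qed auto
qed

definition coeff_op ::
    "((complex \<Rightarrow> complex) \<Rightarrow> complex \<Rightarrow> complex) \<Rightarrow> (nat \<Rightarrow> complex) \<Rightarrow> nat \<Rightarrow> complex"
  where "coeff_op X c = h2coeff (X (h2_fun c))"

lemma
  assumes "\<forall>f\<in>H2. X f \<in> H2" "c \<in> l2"
  shows l2_coeff_op: "coeff_op X c \<in> l2"
    and h2_fun_coeff_op: "h2_fun (coeff_op X c) = X (h2_fun c)"
  using H2_h2coeff assms h2_fun_in_H2 by (simp_all add: coeff_op_def)

lemma invariant_if_coeff_op_invariant: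
  assumes M: "M \<subseteq> H2" and X: "\<forall>f\<in>H2. X f \<in> H2"
    and invariant: "\<forall>c\<in>h2coeff ` M. coeff_op X c \<in> h2coeff ` M"
  shows "\<forall>f\<in>M. X f \<in> M"
proof
  fix f assume f: "f \<in> M"
  then have f_H2: "f \<in> H2"
    using M by blast
  have "coeff_op X (h2coeff f) \<in> {c \<in> l2. h2_fun c \<in> M}"
    using invariant f h2coeff_image_eq[OF M] by blast
  moreover have "h2_fun (coeff_op X (h2coeff f)) = X f"
    using h2_fun_coeff_op[OF X H2_h2coeff(1)[OF f_H2]] H2_h2coeff(2)[OF f_H2] by simp
  ultimately show "X f \<in> M"
    by simp
qed

lemma l2_bounded_op_coeff_op:
  assumes "h2_bounded_op X"
  obtains C where "l2_bounded_op (coeff_op X) C"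
proof -
  obtain C where C: "\<forall>f\<in>H2. h2norm (X f) \<le> C * h2norm f"
    and X_H2: "\<forall>f\<in>H2. X f \<in> H2"
    and X_add: "\<And>f g. f \<in> H2 \<Longrightarrow> g \<in> H2 \<Longrightarrow> X (\<lambda>z. f z + g z) = (\<lambda>z. X f z + X g z)"
    and X_scale: "\<And>a f. f \<in> H2 \<Longrightarrow> X (\<lambda>z. a * f z) = (\<lambda>z. a * X f z)"
    using assms unfolding h2_bounded_op_def by blast
  have "l2_bounded_op (coeff_op X) C"
    unfolding l2_bounded_op_def
  proof (intro conjI ballI allI)
    fix u assume u: "u \<in> l2"
    show "coeff_op X u \<in> l2"
      by (rule l2_coeff_op[OF X_H2 u])
    show "l2_norm (coeff_op X u) \<le> C * l2_norm u"
      using C[rule_format, OF h2_fun_in_H2[OF u]] u by (simp add: h2norm_eq_l2_norm coeff_op_def)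
    fix v assume v: "v \<in> l2"
    have "coeff_op X (\<lambda>m. u m + v m) = h2coeff (h2_fun (\<lambda>m. coeff_op X u m + coeff_op X v m))"
      using X_add h2_fun_in_H2 u v l2_coeff_op[OF X_H2]
      by (simp add: coeff_op_def h2_fun_add h2_fun_coeff_op[OF X_H2, unfolded coeff_op_def])
    then show "coeff_op X (\<lambda>m. u m + v m) = (\<lambda>m. coeff_op X u m + coeff_op X v m)"
      using l2_add(1) l2_coeff_op[OF X_H2] u v by simp
  next
    fix a u assume u: "u \<in> l2"
    have "coeff_op X (\<lambda>m. a * u m) = h2coeff (h2_fun (\<lambda>m. a * coeff_op X u m))"
      using X_scale h2_fun_in_H2 u l2_coeff_op[OF X_H2]
      by (simp add: coeff_op_def h2_fun_scale h2_fun_coeff_op[OF X_H2, unfolded coeff_op_def])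
    then show "coeff_op X (\<lambda>m. a * u m) = (\<lambda>m. a * coeff_op X u m)"
      using l2_scale(1) l2_coeff_op[OF X_H2] u by simp
  qed
  then show ?thesis
    by (rule that)
qed


definition Sn_coeffs :: "(nat \<Rightarrow> complex) \<Rightarrow> (nat \<Rightarrow> complex) \<Rightarrow> nat \<Rightarrow> complex" where
  "Sn_coeffs b c = taylor_to_fb b (shift (fb_to_taylor b c))"

context finitely_supported
begin

lemma l2_fb_to_taylor: "c \<in> l2 \<Longrightarrow> fb_to_taylor b c \<in> l2"
  by (rule l2_bounded_op_l2[OF l2_bounded_op_fb_to_taylor])

lemma l2_taylor_to_fb: "d \<in> l2 \<Longrightarrow> taylor_to_fb b d \<in> l2"
  by (rule l2_bounded_op_l2[OF l2_bounded_op_taylor_to_fb])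

lemma fb_sums:
  assumes c: "c \<in> l2" and z: "z \<in> ball 0 1"
  shows "(\<lambda>m. c m * fb b m z) sums h2_fun (fb_to_taylor b c) z"
proof -
  define bc where "bc = (\<lambda>k. b k * c k)"
  have bc_l2: "bc \<in> l2"
    using l2_dominated(1)[OF c bmax_nonneg, of bc] norm_le_bmax
    by (auto simp: bc_def norm_mult mult_right_mono)
  have "(\<lambda>m. c m * fb b m z) sums (h2_fun c z + z * h2_fun bc z)"
    using sums_add[OF h2_fun_sums[OF c z] sums_mult[OF h2_fun_sums[OF bc_l2 z], of z]]
    by (simp add: fb_def bc_def algebra_simps)
  moreover have "h2_fun (fb_to_taylor b c) = (\<lambda>z. h2_fun c z + Mz (h2_fun bc) z)"
    unfolding fb_to_taylor_def
    using h2_fun_add[OF c l2_shift(1)[OF bc_l2]] Mz_h2_fun[OF bc_l2] by (simp add: bc_def)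
  ultimately show ?thesis
    by (simp add: Mz_def)
qed

lemma Uk_adj_eq:
  assumes "f \<in> H2"
  shows "Uk_adj b f = h2_fun (fb_to_taylor b (h2coeff f))"
proof
  fix z
  show "Uk_adj b f z = h2_fun (fb_to_taylor b (h2coeff f)) z"
    using fb_sums[OF H2_h2coeff(1)[OF assms], of z]
    by (cases "z \<in> ball 0 1") (auto simp: Uk_adj_def h2_fun_def sums_iff)
qed

lemma hk_coeff_h2_fun:
  assumes d: "d \<in> l2"
  shows "hk_coeff b (h2_fun d) = taylor_to_fb b d"
  unfolding hk_coeff_def
proof (rule the_equality)
  show "taylor_to_fb b d \<in> l2 \<and>
      (\<forall>z\<in>ball 0 1. (\<lambda>m. taylor_to_fb b d m * fb b m z) sums h2_fun d z)"
    using l2_taylor_to_fb[OF d] fb_sums[OF l2_taylor_to_fb[OF d]] by simp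
  fix c assume c: "c \<in> l2 \<and> (\<forall>z\<in>ball 0 1. (\<lambda>m. c m * fb b m z) sums h2_fun d z)"
  have "\<forall>z\<in>ball 0 1. (\<lambda>m. fb_to_taylor b c m * z ^ m) sums h2_fun d z"
    using c fb_sums h2_fun_sums[OF l2_fb_to_taylor] sums_unique2 by metis
  then have "fb_to_taylor b c = d"
    using powser_coeffs_unique h2_fun_sums[OF d] by blast
  then show "c = taylor_to_fb b d"
    by auto
qed

lemma Sn_h2_fun:
  assumes c: "c \<in> l2"
  shows "Sn b (h2_fun c) = h2_fun (Sn_coeffs b c)"
proof -
  have d: "shift (fb_to_taylor b c) \<in> l2"
    using l2_shift(1)[OF l2_fb_to_taylor[OF c]] .
  have "Sn b (h2_fun c) = Uk b (h2_fun (shift (fb_to_taylor b c)))"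
    using Uk_adj_eq[OF h2_fun_in_H2[OF c]] Mz_h2_fun[OF l2_fb_to_taylor[OF c]] c by (simp add: Sn_def)
  also have "\<dots> = h2_fun (Sn_coeffs b c)"
    by (simp only: Uk_def hk_coeff_h2_fun[OF d]) (simp add: h2_fun_def Sn_coeffs_def)
  finally show ?thesis .
qed

lemma h2coeff_Sn:
  assumes "f \<in> H2"
  shows "h2coeff (Sn b f) = Sn_coeffs b (h2coeff f)"
  using Sn_h2_fun[OF H2_h2coeff(1)[OF assms]] H2_h2coeff[OF assms]
    l2_taylor_to_fb[OF l2_shift(1)[OF l2_fb_to_taylor[OF H2_h2coeff(1)[OF assms]]]]
  by (simp add: Sn_coeffs_def)

lemma Sn_coeffs_invariant:
  assumes "M \<subseteq> H2" "\<forall>f\<in>M. Sn b f \<in> M"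
  shows "\<forall>c\<in>h2coeff ` M. Sn_coeffs b c \<in> h2coeff ` M"
  using assms h2coeff_Sn by force

lemma coeff_op_commutes_Sn_coeffs:
  assumes X_H2: "\<forall>f\<in>H2. X f \<in> H2" and comm: "\<forall>f\<in>H2. X (Sn b f) = Sn b (X f)"
  shows "\<forall>c\<in>l2. coeff_op X (Sn_coeffs b c) = Sn_coeffs b (coeff_op X c)"
proof
  fix c :: "nat \<Rightarrow> complex" assume c: "c \<in> l2"
  have "coeff_op X (Sn_coeffs b c) = h2coeff (X (Sn b (h2_fun c)))"
    by (simp add: Sn_h2_fun[OF c] coeff_op_def)
  also have "\<dots> = h2coeff (Sn b (X (h2_fun c)))"
    using comm h2_fun_in_H2[OF c] by simp
  also have "\<dots> = Sn_coeffs b (coeff_op X c)"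
    using h2coeff_Sn X_H2 h2_fun_in_H2[OF c] by (simp add: coeff_op_def)
  finally show "coeff_op X (Sn_coeffs b c) = Sn_coeffs b (coeff_op X c)" .
qed

end


theorem theorem5p1:
  fixes n :: nat and b :: "nat \<Rightarrow> complex"
    and M :: "(complex \<Rightarrow> complex) set"
    and X :: "(complex \<Rightarrow> complex) \<Rightarrow> (complex \<Rightarrow> complex)"
  assumes "n \<ge> 1"
    and "\<forall>t\<ge>n. b t = 0"
    and "h2_closed_subspace M"
    and "\<forall>f\<in>M. Sn b f \<in> M"
    and "h2_bounded_op X"
    and "\<forall>f\<in>H2. X (Sn b f) = Sn b (X f)"
  shows "\<forall>f\<in>M. X f \<in> M"
proof -
  interpret finitely_supported b n
    using assms(2) by unfold_locales simp
  have M_H2: "M \<subseteq> H2" and X_H2: "\<forall>f\<in>H2. X f \<in> H2"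
    using assms(3,5) by (auto simp: h2_closed_subspace_def h2_bounded_op_def)
  obtain C where X: "l2_bounded_op (coeff_op X) C"
    using l2_bounded_op_coeff_op[OF assms(5)] .
  have "\<forall>c\<in>h2coeff ` M. coeff_op X c \<in> h2coeff ` M"
    by (rule similarity_preserves_hyperinvariance[OF _ shift_invariant_subspace_hyperinvariant
          l2_bounded_op_fb_to_taylor l2_bounded_op_taylor_to_fb _ _
          l2_closed_subspace_h2coeff_image[OF assms(3)]
          Sn_coeffs_invariant[OF M_H2 assms(4), unfolded Sn_coeffs_def] X
          coeff_op_commutes_Sn_coeffs[OF X_H2 assms(6), unfolded Sn_coeffs_def]])
      (simp_all add: l2_shift)
  then show ?thesis
    by (rule invariant_if_coeff_op_invariant[OF M_H2 X_H2])
qed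

end
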